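(* Let $(E,C)$ be a configuration structure that is closed under nonempty intersections. Then: (1) $C$ is closed under directed unions iff $(E,C)$ has finite conflict; (2) $C$ is weakly coherent iff $(E,C)$ is rooted and has binary conflict; (3) $C$ is closed under finitely compatible unions iff it is closed under finitely consistent unions; (4) $C$ is coherent iff $(E,C)$ is rooted and $C$ is closed under pairwise consistent unions.
   Context: $C\subseteq\mathcal{P}(E)$. $X$ is consistent if $X\subseteq z$ for some $z\in C$; finitely (pairwise) consistent if all its finite subsets (subsets of size $\le2$) are consistent. Closed under nonempty intersections: $\emptyset\ne A\subseteq C\Rightarrow\bigcap A\in C$. Rooted: $\emptyset\in C$. Finite conflict: every $X\subseteq E$ such that each finite $Y\subseteq X$ satisfies $Y\subseteq z\subseteq X$ for some $z\in C$ belongs to $C$; binary conflict: same with $|Y|\le 2$. Closed under directed unions: for every nonempty $A\subseteq C$ such that for all $x,y\in A$ there is $z\in A$ with $x\cup y\subseteq z$, $\bigcup A\in C$. Weakly coherent: for every $A\subseteq C$ such that for all $x,y\in A$ there is $z\in C$ with $x\cup y\subseteq z\subseteq\bigcup A$, $\bigcup A\in C$. Closed under finitely compatible unions: $A\subseteq C$ and $\bigcup F$ consistent for every finite $F\subseteq A$ imply $\bigcup A\in C$. Coherent: $A\subseteq C$ and $x\cup y$ consistent for all $x,y\in A$ imply $\bigcup A\in C$. Closed under finitely (pairwise) consistent unions: $A\subseteq C$ with $\bigcup A$ finitely (pairwise) consistent implies $\bigcup A\in C$. *)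

theory Defs
  imports Main
begin

definition config_structure :: "'e set \<Rightarrow> 'e set set \<Rightarrow> bool" where
  "config_structure E C \<longleftrightarrow> C \<subseteq> Pow E"

definition consistent :: "'e set set \<Rightarrow> 'e set \<Rightarrow> bool" where
  "consistent C X \<longleftrightarrow> (\<exists>z\<in>C. X \<subseteq> z)"

definition fin_consistent :: "'e set set \<Rightarrow> 'e set \<Rightarrow> bool" where
  "fin_consistent C X \<longleftrightarrow> (\<forall>Y. Y \<subseteq> X \<and> finite Y \<longrightarrow> consistent C Y)"

definition pw_consistent :: "'e set set \<Rightarrow> 'e set \<Rightarrow> bool" where
  "pw_consistent C X \<longleftrightarrow> (\<forall>Y. Y \<subseteq> X \<and> finite Y \<and> card Y \<le> 2 \<longrightarrow> consistent C Y)"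

definition closed_ne_inter :: "'e set set \<Rightarrow> bool" where
  "closed_ne_inter C \<longleftrightarrow> (\<forall>A. A \<noteq> {} \<and> A \<subseteq> C \<longrightarrow> \<Inter>A \<in> C)"

definition rooted :: "'e set set \<Rightarrow> bool" where
  "rooted C \<longleftrightarrow> {} \<in> C"

definition finite_conflict :: "'e set \<Rightarrow> 'e set set \<Rightarrow> bool" where
  "finite_conflict E C \<longleftrightarrow>
     (\<forall>X. X \<subseteq> E \<and> (\<forall>Y. Y \<subseteq> X \<and> finite Y \<longrightarrow> (\<exists>z\<in>C. Y \<subseteq> z \<and> z \<subseteq> X)) \<longrightarrow> X \<in> C)"

definition binary_conflict :: "'e set \<Rightarrow> 'e set set \<Rightarrow> bool" where
  "binary_conflict E C \<longleftrightarrow>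
     (\<forall>X. X \<subseteq> E \<and> (\<forall>Y. Y \<subseteq> X \<and> finite Y \<and> card Y \<le> 2 \<longrightarrow> (\<exists>z\<in>C. Y \<subseteq> z \<and> z \<subseteq> X)) \<longrightarrow> X \<in> C)"

definition closed_directed_unions :: "'e set set \<Rightarrow> bool" where
  "closed_directed_unions C \<longleftrightarrow>
     (\<forall>A. A \<noteq> {} \<and> A \<subseteq> C \<and> (\<forall>x\<in>A. \<forall>y\<in>A. \<exists>z\<in>A. x \<union> y \<subseteq> z) \<longrightarrow> \<Union>A \<in> C)"

definition weakly_coherent :: "'e set set \<Rightarrow> bool" where
  "weakly_coherent C \<longleftrightarrow>
     (\<forall>A. A \<subseteq> C \<and> (\<forall>x\<in>A. \<forall>y\<in>A. \<exists>z\<in>C. x \<union> y \<subseteq> z \<and> z \<subseteq> \<Union>A) \<longrightarrow> \<Union>A \<in> C)"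

definition closed_fin_compatible_unions :: "'e set set \<Rightarrow> bool" where
  "closed_fin_compatible_unions C \<longleftrightarrow>
     (\<forall>A. A \<subseteq> C \<and> (\<forall>F. F \<subseteq> A \<and> finite F \<longrightarrow> consistent C (\<Union>F)) \<longrightarrow> \<Union>A \<in> C)"

definition coherent :: "'e set set \<Rightarrow> bool" where
  "coherent C \<longleftrightarrow>
     (\<forall>A. A \<subseteq> C \<and> (\<forall>x\<in>A. \<forall>y\<in>A. consistent C (x \<union> y)) \<longrightarrow> \<Union>A \<in> C)"

definition closed_fin_consistent_unions :: "'e set set \<Rightarrow> bool" where
  "closed_fin_consistent_unions C \<longleftrightarrow>
     (\<forall>A. A \<subseteq> C \<and> fin_consistent C (\<Union>A) \<longrightarrow> \<Union>A \<in> C)"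

definition closed_pw_consistent_unions :: "'e set set \<Rightarrow> bool" where
  "closed_pw_consistent_unions C \<longleftrightarrow>
     (\<forall>A. A \<subseteq> C \<and> pw_consistent C (\<Union>A) \<longrightarrow> \<Union>A \<in> C)"

end

theory Submission
  imports Defs
begin

text \<open>Closure under nonempty intersections gives every consistent set \<open>Y\<close> a least
  configuration \<open>cl C Y\<close> containing it. A set \<open>X\<close> satisfying one of the local (conflict or
  consistency) conditions is the union of the closures of its finite subsets, a directed family,
  for (1) and (3), or of its singletons, a family with pairwise bounded unions, for (2) and (4);
  the corresponding union closure then puts \<open>X\<close> (or a bound for it) into \<open>C\<close>. Conversely, a
  finite subset of a union is covered by finitely many members, which turns the union conditions
  into the local ones.\<close>

definition cl :: "'e set set \<Rightarrow> 'e set \<Rightarrow> 'e set" where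
  "cl C Y = \<Inter>{z\<in>C. Y \<subseteq> z}"

definition directed :: "'e set set \<Rightarrow> bool" where
  "directed A \<longleftrightarrow> (\<forall>x\<in>A. \<forall>y\<in>A. \<exists>z\<in>A. x \<union> y \<subseteq> z)"

lemma closed_directed_unions_iff:
  "closed_directed_unions C \<longleftrightarrow> (\<forall>A. A \<noteq> {} \<and> A \<subseteq> C \<and> directed A \<longrightarrow> \<Union>A \<in> C)"
  unfolding closed_directed_unions_def directed_def ..

lemma cl_in:
  assumes "closed_ne_inter C" and "consistent C Y"
  shows "cl C Y \<in> C"
proof -
  have "{z\<in>C. Y \<subseteq> z} \<noteq> {}"
    using assms(2) unfolding consistent_def by blast
  moreover have "{z\<in>C. Y \<subseteq> z} \<subseteq> C"
    by blast
  ultimately show ?thesis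
    using assms(1)[unfolded closed_ne_inter_def, rule_format, of "{z\<in>C. Y \<subseteq> z}"]
    unfolding cl_def by blast
qed

lemma subset_cl: "Y \<subseteq> cl C Y"
  unfolding cl_def by blast

lemma cl_least: "z \<in> C \<Longrightarrow> Y \<subseteq> z \<Longrightarrow> cl C Y \<subseteq> z"
  unfolding cl_def by blast

lemma cl_mono: "Y \<subseteq> Y' \<Longrightarrow> cl C Y \<subseteq> cl C Y'"
  unfolding cl_def by blast

lemma consistent_subset: "consistent C X \<Longrightarrow> Y \<subseteq> X \<Longrightarrow> consistent C Y"
  unfolding consistent_def by blast

lemma fin_consistent_subset: "fin_consistent C X \<Longrightarrow> Y \<subseteq> X \<Longrightarrow> fin_consistent C Y"
  unfolding fin_consistent_def by blast

lemma pw_consistent_subset: "pw_consistent C X \<Longrightarrow> Y \<subseteq> X \<Longrightarrow> pw_consistent C Y"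
  unfolding pw_consistent_def by blast

lemma card_le_2_cases:
  assumes "finite Y" "card Y \<le> 2"
  obtains "Y = {}" | a b where "Y = {a, b}"
proof -
  have "card Y = 0 \<or> card Y = 1 \<or> card Y = 2"
    using assms(2) by linarith
  then show thesis
  proof (elim disjE)
    assume "card Y = 0"
    then show thesis using assms(1) that(1) by simp
  next
    assume "card Y = 1"
    then obtain a where "Y = {a, a}" by (auto simp: card_1_singleton_iff)
    then show thesis using that(2) by blast
  next
    assume "card Y = 2"
    then show thesis using that(2) by (auto simp: card_2_iff)
  qed
qed

lemma all_card_le_2_subsets_iff:
  "(\<forall>Y. Y \<subseteq> X \<and> finite Y \<and> card Y \<le> 2 \<longrightarrow> P Y) \<longleftrightarrow> P {} \<and> (\<forall>a\<in>X. \<forall>b\<in>X. P {a, b})"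
proof
  assume H: "\<forall>Y. Y \<subseteq> X \<and> finite Y \<and> card Y \<le> 2 \<longrightarrow> P Y"
  have "card {a, b} \<le> 2" for a b :: 'a
    by (simp add: card_insert_if)
  then show "P {} \<and> (\<forall>a\<in>X. \<forall>b\<in>X. P {a, b})"
    using H[rule_format, of "{}"] H[rule_format, of "{_, _}"] by simp
next
  assume P: "P {} \<and> (\<forall>a\<in>X. \<forall>b\<in>X. P {a, b})"
  show "\<forall>Y. Y \<subseteq> X \<and> finite Y \<and> card Y \<le> 2 \<longrightarrow> P Y"
  proof (intro allI impI, elim conjE)
    fix Y assume "Y \<subseteq> X" "finite Y" "card Y \<le> 2"
    from \<open>finite Y\<close> \<open>card Y \<le> 2\<close> show "P Y"
    proof (cases rule: card_le_2_cases)
      case 1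
      then show ?thesis using P by simp
    next
      case (2 a b)
      then show ?thesis using P \<open>Y \<subseteq> X\<close> by simp
    qed
  qed
qed

lemma pw_consistent_iff:
  "pw_consistent C X \<longleftrightarrow> C \<noteq> {} \<and> (\<forall>a\<in>X. \<forall>b\<in>X. consistent C {a, b})"
  unfolding pw_consistent_def all_card_le_2_subsets_iff by (simp add: consistent_def ex_in_conv)

lemma directed_finite_bound:
  assumes "directed A" "A \<noteq> {}" "finite F" "F \<subseteq> A"
  shows "\<exists>z\<in>A. \<Union>F \<subseteq> z"
  using assms(3,4)
proof (induction F rule: finite_induct)
  case empty
  then show ?case using assms(2) by blast
next
  case (insert x F)
  then obtain z where "z \<in> A" "\<Union>F \<subseteq> z"
    by blast
  moreover obtain w where "w \<in> A" "x \<union> z \<subseteq> w"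
    using assms(1)[unfolded directed_def, rule_format, of x z] insert.prems \<open>z \<in> A\<close> by blast
  ultimately show ?case
    by blast
qed

lemma directed_finite_subset_Union:
  assumes "directed A" "A \<noteq> {}" "finite Y" "Y \<subseteq> \<Union>A"
  shows "\<exists>z\<in>A. Y \<subseteq> z"
proof -
  obtain F where "finite F" "F \<subseteq> A" "Y \<subseteq> \<Union>F"
    using assms(3,4) by (rule finite_subset_Union)
  moreover obtain z where "z \<in> A" "\<Union>F \<subseteq> z"
    using directed_finite_bound[OF assms(1,2) \<open>finite F\<close> \<open>F \<subseteq> A\<close>] by blast
  ultimately show ?thesis
    by blast
qed

lemma directed_cl_finite_subsets: "directed (cl C ` {Y. finite Y \<and> Y \<subseteq> X})"
  unfolding directed_def
proof (intro ballI)
  fix x y assume "x \<in> cl C ` {Y. finite Y \<and> Y \<subseteq> X}" "y \<in> cl C ` {Y. finite Y \<and> Y \<subseteq> X}"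
  then obtain Y1 Y2 where "finite Y1" "Y1 \<subseteq> X" "x = cl C Y1" "finite Y2" "Y2 \<subseteq> X" "y = cl C Y2"
    by auto
  moreover have "cl C Y1 \<union> cl C Y2 \<subseteq> cl C (Y1 \<union> Y2)"
    by (simp add: cl_mono)
  moreover have "cl C (Y1 \<union> Y2) \<in> cl C ` {Y. finite Y \<and> Y \<subseteq> X}"
    using calculation by simp
  ultimately show "\<exists>z\<in>cl C ` {Y. finite Y \<and> Y \<subseteq> X}. x \<union> y \<subseteq> z"
    by blast
qed

lemma subset_Union_cl_singletons: "X \<subseteq> \<Union>((\<lambda>e. cl C {e}) ` X)"
  using subset_cl by fastforce

lemma subset_Union_cl_finite_subsets: "X \<subseteq> \<Union>(cl C ` {Y. finite Y \<and> Y \<subseteq> X})"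
proof
  fix e assume "e \<in> X"
  then have "cl C {e} \<in> cl C ` {Y. finite Y \<and> Y \<subseteq> X}" by blast
  then show "e \<in> \<Union>(cl C ` {Y. finite Y \<and> Y \<subseteq> X})"
    using subset_cl[of "{e}" C] by blast
qed

lemma cl_pair_subset: "z \<in> C \<Longrightarrow> a \<in> z \<Longrightarrow> b \<in> z \<Longrightarrow> cl C {a} \<union> cl C {b} \<subseteq> z"
  using cl_least[of z C] by blast

lemma closed_directed_unions_iff_finite_conflict:
  assumes cs: "config_structure E C" and ci: "closed_ne_inter C"
  shows "closed_directed_unions C \<longleftrightarrow> finite_conflict E C"
proof
  assume d: "closed_directed_unions C"
  show "finite_conflict E C" unfolding finite_conflict_def
  proof (intro allI impI, elim conjE)
    fix X assume H: "\<forall>Y. Y \<subseteq> X \<and> finite Y \<longrightarrow> (\<exists>z\<in>C. Y \<subseteq> z \<and> z \<subseteq> X)"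
    define A where "A = cl C ` {Y. finite Y \<and> Y \<subseteq> X}"
    have "cl C Y \<in> C \<and> cl C Y \<subseteq> X" if Y: "finite Y" "Y \<subseteq> X" for Y
    proof -
      obtain z where "z \<in> C" "Y \<subseteq> z" "z \<subseteq> X"
        using H Y by blast
      then show ?thesis
        using cl_least[of z C Y] cl_in[OF ci, of Y] unfolding consistent_def by blast
    qed
    then have "A \<subseteq> C" and "\<Union>A \<subseteq> X"
      unfolding A_def by auto
    moreover have "A \<noteq> {}" "directed A"
      unfolding A_def using directed_cl_finite_subsets by auto
    ultimately have "\<Union>A \<in> C"
      using d[unfolded closed_directed_unions_iff, rule_format, of A] by blast
    moreover have "X \<subseteq> \<Union>A"
      unfolding A_def by (rule subset_Union_cl_finite_subsets)
    ultimately show "X \<in> C"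
      using \<open>\<Union>A \<subseteq> X\<close> by auto
  qed
next
  assume f: "finite_conflict E C"
  show "closed_directed_unions C" unfolding closed_directed_unions_iff
  proof (intro allI impI, elim conjE)
    fix A assume "A \<noteq> {}" "A \<subseteq> C" "directed A"
    then have "\<exists>z\<in>C. Y \<subseteq> z \<and> z \<subseteq> \<Union>A" if "Y \<subseteq> \<Union>A \<and> finite Y" for Y
      using directed_finite_subset_Union[of A Y] that by blast
    moreover have "\<Union>A \<subseteq> E"
      using \<open>A \<subseteq> C\<close> cs unfolding config_structure_def by blast
    ultimately show "\<Union>A \<in> C"
      using f[unfolded finite_conflict_def, rule_format, of "\<Union>A"] by blast
  qed
qed

lemma weakly_coherent_iff_rooted_binary_conflict:
  assumes cs: "config_structure E C" and ci: "closed_ne_inter C"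
  shows "weakly_coherent C \<longleftrightarrow> rooted C \<and> binary_conflict E C"
proof
  assume w: "weakly_coherent C"
  have "rooted C"
    using w[unfolded weakly_coherent_def, rule_format, of "{}"] unfolding rooted_def by simp
  moreover have "binary_conflict E C" unfolding binary_conflict_def all_card_le_2_subsets_iff
  proof (intro allI impI, elim conjE)
    fix X assume H: "\<forall>a\<in>X. \<forall>b\<in>X. \<exists>z\<in>C. {a, b} \<subseteq> z \<and> z \<subseteq> X"
    define A where "A = (\<lambda>e. cl C {e}) ` X"
    have pair: "\<exists>z\<in>C. cl C {a} \<union> cl C {b} \<subseteq> z \<and> z \<subseteq> X"
      if ab: "a \<in> X" "b \<in> X" for a b
    proof -
      obtain z where "z \<in> C" "{a, b} \<subseteq> z" "z \<subseteq> X"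
        using H ab by blast
      then show ?thesis
        using cl_pair_subset[of z C a b] by blast
    qed
    have "cl C {e} \<in> C \<and> cl C {e} \<subseteq> X" if e: "e \<in> X" for e
    proof -
      obtain z where "z \<in> C" "cl C {e} \<subseteq> z" "z \<subseteq> X"
        using pair[OF e e] by auto
      then show ?thesis
        using cl_in[OF ci, of "{e}"] subset_cl[of "{e}" C] unfolding consistent_def by blast
    qed
    then have "A \<subseteq> C" "\<Union>A \<subseteq> X"
      unfolding A_def by auto
    moreover have "\<forall>x\<in>A. \<forall>y\<in>A. \<exists>z\<in>C. x \<union> y \<subseteq> z \<and> z \<subseteq> \<Union>A"
    proof (intro ballI)
      fix x y assume xy: "x \<in> A" "y \<in> A"
      obtain a b where ab: "a \<in> X" "b \<in> X" "x = cl C {a}" "y = cl C {b}"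
        using xy unfolding A_def by blast
      obtain z where "z \<in> C" "x \<union> y \<subseteq> z" "z \<subseteq> X"
        using pair[OF ab(1,2)] ab(3,4) by blast
      moreover have "X \<subseteq> \<Union>A"
        unfolding A_def by (rule subset_Union_cl_singletons)
      ultimately show "\<exists>z\<in>C. x \<union> y \<subseteq> z \<and> z \<subseteq> \<Union>A"
        by blast
    qed
    ultimately have "\<Union>A \<in> C"
      using w[unfolded weakly_coherent_def, rule_format, OF conjI] by blast
    moreover have "X \<subseteq> \<Union>A"
      unfolding A_def by (rule subset_Union_cl_singletons)
    ultimately show "X \<in> C"
      using \<open>\<Union>A \<subseteq> X\<close> by auto
  qed
  ultimately show "rooted C \<and> binary_conflict E C" ..
next
  assume "rooted C \<and> binary_conflict E C"
  then have r: "{} \<in> C" and b: "binary_conflict E C"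
    unfolding rooted_def by auto
  show "weakly_coherent C" unfolding weakly_coherent_def
  proof (intro allI impI, elim conjE)
    fix A assume "A \<subseteq> C" and H: "\<forall>x\<in>A. \<forall>y\<in>A. \<exists>z\<in>C. x \<union> y \<subseteq> z \<and> z \<subseteq> \<Union>A"
    have "\<forall>a\<in>\<Union>A. \<forall>b\<in>\<Union>A. \<exists>z\<in>C. {a, b} \<subseteq> z \<and> z \<subseteq> \<Union>A"
    proof (intro ballI)
      fix a b assume "a \<in> \<Union>A" "b \<in> \<Union>A"
      then obtain x y where "x \<in> A" "y \<in> A" "a \<in> x" "b \<in> y"
        by blast
      moreover obtain z where "z \<in> C" "x \<union> y \<subseteq> z" "z \<subseteq> \<Union>A"
        using H \<open>x \<in> A\<close> \<open>y \<in> A\<close> by blast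
      ultimately show "\<exists>z\<in>C. {a, b} \<subseteq> z \<and> z \<subseteq> \<Union>A"
        by blast
    qed
    moreover have "\<Union>A \<subseteq> E"
      using \<open>A \<subseteq> C\<close> cs unfolding config_structure_def by blast
    ultimately show "\<Union>A \<in> C"
      using r b[unfolded binary_conflict_def all_card_le_2_subsets_iff, rule_format, of "\<Union>A"]
      by blast
  qed
qed

lemma fin_consistent_imp_consistent:
  assumes ci: "closed_ne_inter C" and cu: "closed_fin_compatible_unions C"
    and fc: "fin_consistent C X"
  shows "consistent C X"
proof -
  define A where "A = cl C ` {Y. finite Y \<and> Y \<subseteq> X}"
  have "A \<subseteq> C"
    using fc cl_in[OF ci] unfolding A_def fin_consistent_def by blast
  moreover have "consistent C (\<Union>F)" if F: "F \<subseteq> A \<and> finite F" for F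
  proof -
    have "A \<noteq> {}" "directed A"
      unfolding A_def using directed_cl_finite_subsets by auto
    then obtain z where "z \<in> A" "\<Union>F \<subseteq> z"
      using directed_finite_bound[of A F] F by blast
    then show "consistent C (\<Union>F)"
      using \<open>A \<subseteq> C\<close> unfolding consistent_def by blast
  qed
  ultimately have "\<Union>A \<in> C"
    using cu[unfolded closed_fin_compatible_unions_def, rule_format, of A] by blast
  then show ?thesis
    using subset_Union_cl_finite_subsets[of X C] unfolding A_def consistent_def by blast
qed

lemma closed_fin_compatible_unions_iff_fin_consistent_unions:
  assumes ci: "closed_ne_inter C"
  shows "closed_fin_compatible_unions C \<longleftrightarrow> closed_fin_consistent_unions C"
proof
  assume cu: "closed_fin_compatible_unions C"
  show "closed_fin_consistent_unions C" unfolding closed_fin_consistent_unions_def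
  proof (intro allI impI, elim conjE)
    fix A assume "A \<subseteq> C" "fin_consistent C (\<Union>A)"
    then have "consistent C (\<Union>F)" if "F \<subseteq> A \<and> finite F" for F
      using fin_consistent_imp_consistent[OF ci cu] fin_consistent_subset[of C "\<Union>A" "\<Union>F"] that
      by blast
    then show "\<Union>A \<in> C"
      using cu[unfolded closed_fin_compatible_unions_def, rule_format, of A] \<open>A \<subseteq> C\<close> by blast
  qed
next
  assume cu: "closed_fin_consistent_unions C"
  show "closed_fin_compatible_unions C" unfolding closed_fin_compatible_unions_def
  proof (intro allI impI, elim conjE)
    fix A assume "A \<subseteq> C" and H: "\<forall>F. F \<subseteq> A \<and> finite F \<longrightarrow> consistent C (\<Union>F)"
    have "fin_consistent C (\<Union>A)" unfolding fin_consistent_def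
    proof (intro allI impI, elim conjE)
      fix Y assume "Y \<subseteq> \<Union>A" "finite Y"
      then obtain F where "finite F" "F \<subseteq> A" "Y \<subseteq> \<Union>F"
        using \<open>finite Y\<close> by (metis finite_subset_Union)
      then show "consistent C Y"
        using H consistent_subset by blast
    qed
    then show "\<Union>A \<in> C"
      using cu[unfolded closed_fin_consistent_unions_def, rule_format, of A] \<open>A \<subseteq> C\<close> by blast
  qed
qed

lemma pw_consistent_imp_consistent:
  assumes ci: "closed_ne_inter C" and co: "coherent C" and pw: "pw_consistent C X"
  shows "consistent C X"
proof -
  define A where "A = (\<lambda>e. cl C {e}) ` X"
  have pair: "consistent C (cl C {a} \<union> cl C {b})" if ab: "a \<in> X" "b \<in> X" for a b
  proof -
    obtain z where "z \<in> C" "{a, b} \<subseteq> z"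
      using pw ab unfolding pw_consistent_iff consistent_def by blast
    then show ?thesis
      using cl_pair_subset[of z C a b] unfolding consistent_def by blast
  qed
  have "consistent C {e}" if "e \<in> X" for e
    using pw that unfolding pw_consistent_iff by (metis insert_absorb2)
  then have "A \<subseteq> C"
    using cl_in[OF ci] unfolding A_def by blast
  then have "\<Union>A \<in> C"
    using co[unfolded coherent_def, rule_format, of A] pair unfolding A_def by blast
  then show ?thesis
    using subset_Union_cl_singletons[of X C] unfolding A_def consistent_def by blast
qed

lemma coherent_iff_rooted_pw_consistent_unions:
  assumes ci: "closed_ne_inter C"
  shows "coherent C \<longleftrightarrow> rooted C \<and> closed_pw_consistent_unions C"
proof
  assume co: "coherent C"
  have "rooted C"
    using co[unfolded coherent_def, rule_format, of "{}"] unfolding rooted_def by simp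
  moreover have "closed_pw_consistent_unions C" unfolding closed_pw_consistent_unions_def
  proof (intro allI impI, elim conjE)
    fix A assume "A \<subseteq> C" "pw_consistent C (\<Union>A)"
    then have "consistent C (x \<union> y)" if "x \<in> A" "y \<in> A" for x y
      using pw_consistent_imp_consistent[OF ci co] pw_consistent_subset[of C "\<Union>A" "x \<union> y"] that
      by blast
    then show "\<Union>A \<in> C"
      using co[unfolded coherent_def, rule_format, of A] \<open>A \<subseteq> C\<close> by blast
  qed
  ultimately show "rooted C \<and> closed_pw_consistent_unions C" ..
next
  assume "rooted C \<and> closed_pw_consistent_unions C"
  then have r: "{} \<in> C" and p: "closed_pw_consistent_unions C"
    unfolding rooted_def by auto
  show "coherent C" unfolding coherent_def
  proof (intro allI impI, elim conjE)
    fix A assume "A \<subseteq> C" and H: "\<forall>x\<in>A. \<forall>y\<in>A. consistent C (x \<union> y)"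
    have "consistent C {a, b}" if ab: "a \<in> \<Union>A" "b \<in> \<Union>A" for a b
    proof -
      obtain x y where "x \<in> A" "y \<in> A" "a \<in> x" "b \<in> y"
        using ab by blast
      then show ?thesis
        using H consistent_subset[of C "x \<union> y" "{a, b}"] by blast
    qed
    then have "pw_consistent C (\<Union>A)"
      using r unfolding pw_consistent_iff by blast
    then show "\<Union>A \<in> C"
      using p[unfolded closed_pw_consistent_unions_def, rule_format, of A] \<open>A \<subseteq> C\<close> by blast
  qed
qed

theorem mainTheorem14:
  fixes E :: "'e set" and C :: "'e set set"
  assumes "config_structure E C"
    and "closed_ne_inter C"
  shows "(closed_directed_unions C \<longleftrightarrow> finite_conflict E C) \<and>
         (weakly_coherent C \<longleftrightarrow> (rooted C \<and> binary_conflict E C)) \<and>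
         (closed_fin_compatible_unions C \<longleftrightarrow> closed_fin_consistent_unions C) \<and>
         (coherent C \<longleftrightarrow> (rooted C \<and> closed_pw_consistent_unions C))"
  using closed_directed_unions_iff_finite_conflict[OF assms]
    weakly_coherent_iff_rooted_binary_conflict[OF assms]
    closed_fin_compatible_unions_iff_fin_consistent_unions[OF assms(2)]
    coherent_iff_rooted_pw_consistent_unions[OF assms(2)]
  by blast

end
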